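(* Let $\tau$ be a face of the positive cone in $\mathbb R^n$ of dimension $t$ with $0<t\le n-1$, let $1\le p,q<\infty$, and equip $\mathbb R^n$ and $\mathbb R^{n-t}\cong\mathbb R^n/\mathbb R\tau$ with Lebesgue measure. Let $M$ be a cubically encoded persistence module over $\mathbb R^n$. If $\|M\|_p<\infty$, then $\|M/\tau\|_q=0$.
   Context: Persistence modules are functors from $\mathbb R^n$ (product order) to finite-dimensional vector spaces over a field. $M$ is cubically encoded if $M\cong M'\circ e$ for an order-preserving map $e\colon\mathbb R^n\to\mathcal P$ to a finite poset whose fibers are finite unions of cubes (products of intervals of $\mathbb R$). A face of the positive cone is $\tau=\{\sum_i a_ie_{j_i}: a_i\ge0\}$ for a set of standard basis vectors $e_{j_1},\dots,e_{j_t}$; $\mathbb R^n/\mathbb R\tau$ is identified with $\mathbb R^{n-t}$ via the remaining coordinates. The quotient restriction $M/\tau$ is the $\mathbb R^n/\mathbb R\tau$-module with $(M/\tau)_{w+\mathbb R\tau}=\varinjlim_{u\in w+\tau}M_u$, with induced structure maps. The $L^p$-Hilbert amplitude is $\|M\|_p=(\int\dim M(x)^p\,d\lambda(x))^{1/p}$, $\lambda$ Lebesgue measure. *)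

theory Defs
  imports "HOL-Analysis.Analysis"
begin

text \<open>Vector spaces over a field \<open>'k\<close> are subspaces of a common ambient
  \<open>'k\<close>-vector space \<open>'v\<close> with scalar multiplication \<open>s\<close>.
  The ambient \<open>\<real>^n\<close> is \<open>'n \<Rightarrow> real\<close> for a finite index type \<open>'n\<close>
  (so n = CARD('n)), ordered by the product (pointwise) order.\<close>

definition fin_dim_subspace :: "('k::field \<Rightarrow> 'v::ab_group_add \<Rightarrow> 'v) \<Rightarrow> 'v set \<Rightarrow> bool" where
  "fin_dim_subspace s W \<longleftrightarrow> module.subspace s W \<and>
     (\<exists>B. finite B \<and> B \<subseteq> W \<and> module.span s B = W)"

definition lin_on :: "('k::field \<Rightarrow> 'v::ab_group_add \<Rightarrow> 'v) \<Rightarrow> 'v set \<Rightarrow> ('v \<Rightarrow> 'v) \<Rightarrow> bool" where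
  "lin_on s W g \<longleftrightarrow> (\<forall>a\<in>W. \<forall>b\<in>W. g (a + b) = g a + g b) \<and> (\<forall>c. \<forall>a\<in>W. g (s c a) = s c (g a))"

definition pers_module ::
  "('k::field \<Rightarrow> 'v::ab_group_add \<Rightarrow> 'v) \<Rightarrow> 'i set \<Rightarrow> ('i \<Rightarrow> 'i \<Rightarrow> bool) \<Rightarrow>
   ('i \<Rightarrow> 'v set) \<Rightarrow> ('i \<Rightarrow> 'i \<Rightarrow> 'v \<Rightarrow> 'v) \<Rightarrow> bool" where
  "pers_module s I le V f \<longleftrightarrow>
     (\<forall>x\<in>I. fin_dim_subspace s (V x)) \<and>
     (\<forall>x\<in>I. \<forall>y\<in>I. le x y \<longrightarrow> lin_on s (V x) (f x y) \<and> f x y ` V x \<subseteq> V y) \<and>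
     (\<forall>x\<in>I. \<forall>v\<in>V x. f x x v = v) \<and>
     (\<forall>x\<in>I. \<forall>y\<in>I. \<forall>z\<in>I. le x y \<longrightarrow> le y z \<longrightarrow> (\<forall>v\<in>V x. f y z (f x y v) = f x z v))"

abbreviation Rn_module ::
  "('k::field \<Rightarrow> 'v::ab_group_add \<Rightarrow> 'v) \<Rightarrow> (('n::finite \<Rightarrow> real) \<Rightarrow> 'v set) \<Rightarrow>
   (('n \<Rightarrow> real) \<Rightarrow> ('n \<Rightarrow> real) \<Rightarrow> 'v \<Rightarrow> 'v) \<Rightarrow> bool" where
  "Rn_module s V f \<equiv> pers_module s UNIV (\<le>) V f"

definition finite_poset :: "nat set \<Rightarrow> (nat \<Rightarrow> nat \<Rightarrow> bool) \<Rightarrow> bool" where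
  "finite_poset P le \<longleftrightarrow> finite P \<and> (\<forall>a\<in>P. le a a) \<and>
     (\<forall>a\<in>P. \<forall>b\<in>P. le a b \<longrightarrow> le b a \<longrightarrow> a = b) \<and>
     (\<forall>a\<in>P. \<forall>b\<in>P. \<forall>c\<in>P. le a b \<longrightarrow> le b c \<longrightarrow> le a c)"

definition cube :: "('n \<Rightarrow> real) set \<Rightarrow> bool" where
  "cube C \<longleftrightarrow> (\<exists>I::'n \<Rightarrow> real set. (\<forall>i. is_interval (I i)) \<and> C = {x. \<forall>i. x i \<in> I i})"

definition finite_union_of_cubes :: "('n \<Rightarrow> real) set \<Rightarrow> bool" where
  "finite_union_of_cubes A \<longleftrightarrow> (\<exists>\<C>. finite \<C> \<and> (\<forall>C\<in>\<C>. cube C) \<and> A = \<Union>\<C>)"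

text \<open>Cubically encoded: \<open>M \<cong> M' \<circ> e\<close> with \<open>e\<close> order preserving into a finite poset
  (realised on a finite subset of \<open>nat\<close>), fibres finite unions of cubes, and a natural
  isomorphism \<open>\<phi>\<close> (pointwise linear bijections commuting with structure maps).\<close>
definition cubically_encoded ::
  "('k::field \<Rightarrow> 'v::ab_group_add \<Rightarrow> 'v) \<Rightarrow> (('n::finite \<Rightarrow> real) \<Rightarrow> 'v set) \<Rightarrow>
   (('n \<Rightarrow> real) \<Rightarrow> ('n \<Rightarrow> real) \<Rightarrow> 'v \<Rightarrow> 'v) \<Rightarrow> bool" where
  "cubically_encoded s V f \<longleftrightarrow>
    (\<exists>P le e V' g \<phi>.
       finite_poset P le \<and>
       (\<forall>x. e x \<in> P) \<and> (\<forall>x y. x \<le> y \<longrightarrow> le (e x) (e y)) \<and>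
       (\<forall>p\<in>P. finite_union_of_cubes {x. e x = p}) \<and>
       pers_module s P le V' g \<and>
       (\<forall>x. lin_on s (V x) (\<phi> x) \<and> bij_betw (\<phi> x) (V x) (V' (e x))) \<and>
       (\<forall>x y. x \<le> y \<longrightarrow> (\<forall>v\<in>V x. \<phi> y (f x y v) = g (e x) (e y) (\<phi> x v))))"

text \<open>Dimension of the directed colimit of \<open>V\<close> over a directed set \<open>U\<close>, unfolded:
  elements of the colimit are classes of pairs \<open>(u,v)\<close>, \<open>v \<in> V u\<close>, and a linear combination
  of classes vanishes iff the combination of the images at some common upper bound in \<open>U\<close> vanishes.\<close>
definition colim_indep ::
  "('k::field \<Rightarrow> 'v::ab_group_add \<Rightarrow> 'v) \<Rightarrow> ('i::order \<Rightarrow> 'v set) \<Rightarrow> ('i \<Rightarrow> 'i \<Rightarrow> 'v \<Rightarrow> 'v) \<Rightarrow>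
   'i set \<Rightarrow> (nat \<Rightarrow> 'i \<times> 'v) \<Rightarrow> nat \<Rightarrow> bool" where
  "colim_indep s V f U F m \<longleftrightarrow>
     (\<forall>i<m. fst (F i) \<in> U \<and> snd (F i) \<in> V (fst (F i))) \<and>
     (\<forall>c::nat \<Rightarrow> 'k.
        (\<exists>w\<in>U. (\<forall>i<m. fst (F i) \<le> w) \<and>
               (\<Sum>i<m. s (c i) (f (fst (F i)) w (snd (F i)))) = 0)
        \<longrightarrow> (\<forall>i<m. c i = 0))"

definition colim_dim ::
  "('k::field \<Rightarrow> 'v::ab_group_add \<Rightarrow> 'v) \<Rightarrow> ('i::order \<Rightarrow> 'v set) \<Rightarrow> ('i \<Rightarrow> 'i \<Rightarrow> 'v \<Rightarrow> 'v) \<Rightarrow>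
   'i set \<Rightarrow> enat" where
  "colim_dim s V f U = Sup {enat m | m. \<exists>F. colim_indep s V f U F m}"

text \<open>Face \<open>\<tau>\<close> spanned by \<open>e_j, j \<in> J\<close>; \<open>\<real>^n/\<real>\<tau>\<close> is identified with functions on the
  remaining coordinates \<open>-J\<close>. For such \<open>y\<close>, \<open>w + \<tau>\<close> with \<open>w\<close> the representative of \<open>y\<close>
  that is \<open>0\<close> on \<open>J\<close>.\<close>
definition coset_face :: "'n set \<Rightarrow> ('n \<Rightarrow> real) \<Rightarrow> ('n \<Rightarrow> real) set" where
  "coset_face J y = {u. (\<forall>i. i \<notin> J \<longrightarrow> u i = y i) \<and> (\<forall>j\<in>J. 0 \<le> u j)}"

definition quot_restr_dim ::
  "('k::field \<Rightarrow> 'v::ab_group_add \<Rightarrow> 'v) \<Rightarrow> (('n \<Rightarrow> real) \<Rightarrow> 'v set) \<Rightarrow>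
   (('n \<Rightarrow> real) \<Rightarrow> ('n \<Rightarrow> real) \<Rightarrow> 'v \<Rightarrow> 'v) \<Rightarrow> 'n set \<Rightarrow> ('n \<Rightarrow> real) \<Rightarrow> enat" where
  "quot_restr_dim s V f J y = colim_dim s V f (coset_face J y)"

definition ennreal_root :: "real \<Rightarrow> ennreal \<Rightarrow> ennreal" where
  "ennreal_root p a = (if a = top then top else ennreal (enn2real a powr (1 / p)))"

definition enat_powr :: "enat \<Rightarrow> real \<Rightarrow> ennreal" where
  "enat_powr d p = (case d of enat k \<Rightarrow> ennreal (real k powr p) | \<infinity> \<Rightarrow> top)"

definition lebesgue_on_coords :: "'n set \<Rightarrow> ('n \<Rightarrow> real) measure" where
  "lebesgue_on_coords A = completion (PiM A (\<lambda>_. lborel))"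

definition Lp_amplitude :: "real \<Rightarrow> 'n set \<Rightarrow> (('n \<Rightarrow> real) \<Rightarrow> enat) \<Rightarrow> ennreal" where
  "Lp_amplitude p A d = ennreal_root p (\<integral>\<^sup>+ x. enat_powr (d x) p \<partial>lebesgue_on_coords A)"

definition hilbert_norm ::
  "real \<Rightarrow> ('k::field \<Rightarrow> 'v::ab_group_add \<Rightarrow> 'v) \<Rightarrow> (('n::finite \<Rightarrow> real) \<Rightarrow> 'v set) \<Rightarrow> ennreal" where
  "hilbert_norm p s V = Lp_amplitude p UNIV (\<lambda>x. enat (vector_space.dim s (V x)))"

definition quot_hilbert_norm ::
  "real \<Rightarrow> ('k::field \<Rightarrow> 'v::ab_group_add \<Rightarrow> 'v) \<Rightarrow> (('n::finite \<Rightarrow> real) \<Rightarrow> 'v set) \<Rightarrow>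
   (('n \<Rightarrow> real) \<Rightarrow> ('n \<Rightarrow> real) \<Rightarrow> 'v \<Rightarrow> 'v) \<Rightarrow> 'n set \<Rightarrow> ennreal" where
  "quot_hilbert_norm q s V f J = Lp_amplitude q (- J) (quot_restr_dim s V f J)"

end

theory Submission
  imports Defs
begin

text \<open>The encoding cuts \<open>\<real>\<^sup>n\<close> into finitely many cubes, on each of which \<open>M\<close> is either
  zero or everywhere nonzero. A nonzero element of \<open>(M/\<tau>)\<^sub>y\<close> survives at all points of
  \<open>y + \<tau>\<close> far enough out, so some cube \<open>C\<close> with \<open>M\<close> nonzero on \<open>C\<close> contains infinitely
  many of them; its sides in the directions of \<open>\<tau>\<close> are then unbounded intervals. Since
  \<open>dim M \<ge> 1\<close> on \<open>C\<close>, finiteness of \<open>\<parallel>M\<parallel>\<^sub>p\<close> bounds the measure of \<open>C\<close>, so some side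
  of \<open>C\<close> transverse to \<open>\<tau>\<close> is a null interval, and the classes \<open>y\<close> for which
  \<open>y + \<tau>\<close> meets \<open>C\<close> form a null set in \<open>\<real>\<^sup>n/\<real>\<tau>\<close>.\<close>

lemma emeasure_lborel_atLeast: "emeasure lborel {a::real..} = \<infinity>"
proof (rule ccontr)
  assume "emeasure lborel {a..} \<noteq> \<infinity>"
  then obtain n :: nat where n: "emeasure lborel {a..} < of_nat n"
    using ennreal_Ex_less_of_nat by (auto simp: less_top)
  have "emeasure lborel {a..a + real n} \<le> emeasure lborel {a..}"
    by (intro emeasure_mono) auto
  with n show False
    by (simp add: ennreal_of_nat_eq_real_of_nat)
qed

lemma emeasure_lborel_interval_infinite:
  assumes "is_interval (S::real set)" and "infinite {k::nat. real k \<in> S}"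
  shows "emeasure lborel S = \<infinity>"
proof -
  obtain k0 where k0: "real k0 \<in> S"
    using assms(2) by (metis empty_Collect_eq finite.emptyI)
  have "{real k0..} \<subseteq> S"
  proof
    fix x assume "x \<in> {real k0..}"
    obtain k where "real k \<in> S" "nat \<lceil>x\<rceil> \<le> k"
      using assms(2) unfolding infinite_nat_iff_unbounded_le by blast
    moreover from this(2) have "x \<le> real k"
      using real_nat_ceiling_ge[of x] by (meson of_nat_le_iff order_trans)
    ultimately show "x \<in> S"
      using assms(1) k0 \<open>x \<in> {real k0..}\<close> unfolding is_interval_1 by (meson atLeast_iff)
  qed
  then have "emeasure lborel {real k0..} \<le> emeasure lborel S"
    using assms(1) by (intro emeasure_mono) (simp_all add: real_interval_borel_measurable)
  then show ?thesis
    by (simp add: emeasure_lborel_atLeast top_unique)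
qed

lemma PiE_intervals_sets_PiM:
  fixes I :: "'n \<Rightarrow> real set"
  assumes "\<And>i. is_interval (I i)" and "finite A"
  shows "PiE A I \<in> sets (PiM A (\<lambda>_. lborel))"
  using assms real_interval_borel_measurable by (intro sets_PiM_I_finite) auto

lemma emeasure_PiM_PiE_intervals:
  fixes I :: "'n \<Rightarrow> real set"
  assumes "\<And>i. is_interval (I i)" and "finite A"
  shows "emeasure (PiM A (\<lambda>_. lborel)) (PiE A I) = (\<Prod>i\<in>A. emeasure lborel (I i))"
proof -
  interpret product_sigma_finite "\<lambda>_. lborel :: real measure" by standard
  show ?thesis
    using assms real_interval_borel_measurable by (intro emeasure_PiM) auto
qed

text \<open>The points of \<open>y + \<tau>\<close> whose \<open>\<tau>\<close>-coordinates all equal \<open>k\<close>; they are cofinal in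
  \<^const>\<open>coset_face\<close>, so they detect the colimit defining \<open>M/\<tau>\<close>.\<close>
definition ray :: "'n set \<Rightarrow> ('n \<Rightarrow> real) \<Rightarrow> nat \<Rightarrow> 'n \<Rightarrow> real" where
  "ray J y k = (\<lambda>i. if i \<in> J then real k else y i)"

lemma ray_in_coset_face: "ray J y k \<in> coset_face J y"
  by (simp add: ray_def coset_face_def)

lemma eventually_le_ray:
  fixes u :: "'n::finite \<Rightarrow> real"
  assumes "u \<in> coset_face J y"
  shows "eventually (\<lambda>k. u \<le> ray J y k) sequentially"
proof -
  have "eventually (\<lambda>k. u i \<le> ray J y k i) sequentially" for i
  proof (cases "i \<in> J")
    case True
    then show ?thesis
      using filterlim_real_sequentially unfolding filterlim_at_top
      by (auto simp: ray_def)
  next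
    case False
    then show ?thesis
      using assms by (simp add: ray_def coset_face_def)
  qed
  then show ?thesis
    unfolding le_fun_def by (rule eventually_all_finite)
qed

lemma AE_finite_ray_hits:
  fixes I :: "'n::finite \<Rightarrow> real set"
  assumes intervals: "\<And>i. is_interval (I i)"
    and finite_measure: "emeasure (PiM UNIV (\<lambda>_. lborel)) (PiE UNIV I) < \<infinity>"
    and "J \<noteq> {}"
  shows "AE y in PiM (-J) (\<lambda>_. lborel). finite {k. ray J y k \<in> PiE UNIV I}"
proof (cases "\<exists>j\<in>J. finite {k. real k \<in> I j}")
  case True
  then obtain j where "j \<in> J" "finite {k. real k \<in> I j}" by blast
  moreover have "{k. ray J y k \<in> PiE UNIV I} \<subseteq> {k. real k \<in> I j}" for y
    using \<open>j \<in> J\<close> by (auto simp: ray_def PiE_iff dest!: bspec[of _ _ j])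
  ultimately have "finite {k. ray J y k \<in> PiE UNIV I}" for y
    by (meson finite_subset)
  then show ?thesis by simp
next
  case False
  then have unbounded: "emeasure lborel (I j) = \<infinity>" if "j \<in> J" for j
    using emeasure_lborel_interval_infinite intervals that by blast
  have "(\<Prod>i\<in>UNIV. emeasure lborel (I i)) \<noteq> \<infinity>"
    using finite_measure emeasure_PiM_PiE_intervals[of I UNIV] intervals by simp
  with unbounded \<open>J \<noteq> {}\<close> obtain i where "i \<notin> J" "emeasure lborel (I i) = 0"
    by (simp add: ennreal_prod_eq_top infinity_ennreal_def) (metis all_not_in_conv ennreal_top_neq_zero)
  then have null: "PiE (-J) I \<in> null_sets (PiM (-J) (\<lambda>_. lborel))"
    using intervals
    by (auto simp: null_sets_def PiE_intervals_sets_PiM emeasure_PiM_PiE_intervals intro: prod_zero)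
  show ?thesis
    using AE_not_in[OF null] AE_space
  proof eventually_elim
    case (elim y)
    then obtain i where "i \<notin> J" "y i \<notin> I i"
      by (auto simp: space_PiM PiE_iff)
    then have "{k. ray J y k \<in> PiE UNIV I} = {}"
      by (auto simp: ray_def PiE_iff dest!: bspec[of _ _ i])
    then show ?case by simp
  qed
qed

lemma lin_on_zero:
  assumes "lin_on s W g" and "0 \<in> W"
  shows "g 0 = 0"
proof -
  have "g (0 + 0) = g 0 + g 0"
    using assms unfolding lin_on_def by blast
  then show ?thesis by simp
qed

lemma bij_betw_lin_on_nonzero_iff:
  assumes "lin_on s W g" and "bij_betw g W W'" and "0 \<in> W"
  shows "(\<exists>z\<in>W. z \<noteq> 0) \<longleftrightarrow> (\<exists>z\<in>W'. z \<noteq> 0)"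
proof -
  have "g 0 = 0"
    using assms(1,3) by (rule lin_on_zero)
  moreover have "g z \<noteq> g 0" if "z \<in> W" "z \<noteq> 0" for z
    using assms(2,3) that by (metis bij_betw_imp_inj_on inj_on_contraD)
  ultimately show ?thesis
    using assms(2) by (metis bij_betw_iff_bijections)
qed

lemma pers_module_zero_mem:
  assumes "vector_space s" and "pers_module s I le V f" and "x \<in> I"
  shows "0 \<in> V x"
proof -
  interpret vector_space s by fact
  show ?thesis
    using assms(2,3) by (auto simp: pers_module_def fin_dim_subspace_def intro: subspace_0)
qed

lemma dim_ge_one_if_nonzero:
  assumes "vector_space s" and "fin_dim_subspace s W" and "z \<in> W" "z \<noteq> 0"
  shows "1 \<le> vector_space.dim s W"
proof (rule ccontr)
  interpret vector_space s by fact
  assume "\<not> 1 \<le> dim W"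
  obtain T where T: "finite T" "W = span T"
    using assms(2) unfolding fin_dim_subspace_def by blast
  obtain B where B: "B \<subseteq> W" "independent B" "W \<subseteq> span B" "card B = dim W"
    by (rule basis_exists)
  have "finite B"
    using independent_span_bound[OF T(1) B(2)] B(1) T(2) by blast
  moreover have "card B = 0"
    using B(4) \<open>\<not> 1 \<le> dim W\<close> by simp
  ultimately have "B = {}" by simp
  with B(3) assms(3,4) show False by auto
qed

lemma colim_indep_image_nonzero:
  fixes s :: "'k::field \<Rightarrow> 'v::ab_group_add \<Rightarrow> 'v"
  assumes "vector_space s" and indep: "colim_indep s V f U F m" and "0 < m"
    and "w \<in> U" and "\<forall>i<m. fst (F i) \<le> w"
  shows "f (fst (F 0)) w (snd (F 0)) \<noteq> 0"
proof
  interpret vector_space s by fact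
  assume zero: "f (fst (F 0)) w (snd (F 0)) = 0"
  define c where "c i = (if i = 0 then 1 else 0 :: 'k)" for i :: nat
  have "(\<Sum>i<m. s (c i) (f (fst (F i)) w (snd (F i)))) = 0"
    using zero by (intro sum.neutral) (simp add: c_def)
  then have "c 0 = 0"
    using indep assms(3-5) unfolding colim_indep_def by blast
  then show False by (simp add: c_def)
qed

lemma colim_dim_nonzero_obtains_indep:
  assumes "colim_dim s V f U \<noteq> 0"
  obtains F m where "colim_indep s V f U F m" and "0 < m"
proof (rule ccontr)
  assume "\<not> thesis"
  with that have "\<forall>F m. colim_indep s V f U F m \<longrightarrow> m = 0" by blast
  then have "colim_dim s V f U \<le> 0"
    unfolding colim_dim_def by (intro Sup_least) (auto simp: zero_enat_def)
  with assms show False by simp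
qed

lemma quot_restr_dim_nonzero_eventually:
  fixes V :: "('n::finite \<Rightarrow> real) \<Rightarrow> 'v::ab_group_add set"
  assumes "vector_space s" and module: "Rn_module s V f" and "quot_restr_dim s V f J y \<noteq> 0"
  shows "eventually (\<lambda>k. \<exists>z\<in>V (ray J y k). z \<noteq> 0) sequentially"
proof -
  obtain F m where F: "colim_indep s V f (coset_face J y) F m" and "0 < m"
    using assms(3) unfolding quot_restr_dim_def by (rule colim_dim_nonzero_obtains_indep)
  have "eventually (\<lambda>k. \<forall>i\<in>{..<m}. fst (F i) \<le> ray J y k) sequentially"
    using F by (intro eventually_ball_finite) (auto simp: colim_indep_def intro: eventually_le_ray)
  then show ?thesis
  proof eventually_elim
    case (elim k)
    let ?z = "f (fst (F 0)) (ray J y k) (snd (F 0))"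
    have "fst (F 0) \<le> ray J y k" and "snd (F 0) \<in> V (fst (F 0))"
      using F \<open>0 < m\<close> elim by (auto simp: colim_indep_def)
    then have "?z \<in> V (ray J y k)"
      using module unfolding pers_module_def by blast
    moreover have "?z \<noteq> 0"
      using colim_indep_image_nonzero[OF assms(1) F \<open>0 < m\<close> ray_in_coset_face] elim by blast
    ultimately show ?case by blast
  qed
qed

lemma cubically_encoded_cube_cover:
  fixes V :: "('n::finite \<Rightarrow> real) \<Rightarrow> 'v::ab_group_add set"
  assumes "vector_space s" and "Rn_module s V f" and "cubically_encoded s V f"
  obtains \<A> where "finite \<A>" and "\<And>C. C \<in> \<A> \<Longrightarrow> cube C" and "\<Union>\<A> = UNIV"
    and "\<And>C x x'. C \<in> \<A> \<Longrightarrow> x \<in> C \<Longrightarrow> x' \<in> C \<Longrightarrow> \<exists>z\<in>V x. z \<noteq> 0 \<Longrightarrow> \<exists>z\<in>V x'. z \<noteq> 0"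
proof -
  from assms(3) obtain P le e V' \<phi> where
    "finite_poset P le" and e: "\<forall>x. e x \<in> P"
    and fibres: "\<forall>p\<in>P. finite_union_of_cubes {x. e x = p}"
    and iso: "\<forall>x. lin_on s (V x) (\<phi> x) \<and> bij_betw (\<phi> x) (V x) (V' (e x))"
    unfolding cubically_encoded_def by (elim exE conjE) blast
  then have "finite P" by (simp add: finite_poset_def)
  from fibres obtain Cs where
    Cs: "\<forall>p\<in>P. finite (Cs p) \<and> (\<forall>C\<in>Cs p. cube C) \<and> {x. e x = p} = \<Union>(Cs p)"
    unfolding finite_union_of_cubes_def by metis
  have nonzero_iff: "(\<exists>z\<in>V x. z \<noteq> 0) \<longleftrightarrow> (\<exists>z\<in>V' (e x). z \<noteq> 0)" for x
    using iso pers_module_zero_mem[OF assms(1,2)]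
    by (intro bij_betw_lin_on_nonzero_iff[of s _ "\<phi> x"]) simp_all
  show ?thesis
  proof (rule that[of "\<Union>(Cs ` P)"])
    show "finite (\<Union>(Cs ` P))"
      using \<open>finite P\<close> Cs by simp
    show "cube C" if "C \<in> \<Union>(Cs ` P)" for C
      using Cs that by auto
    have "x \<in> \<Union>(Cs (e x))" for x
      using Cs e by (metis (mono_tags) mem_Collect_eq)
    then show "\<Union>(\<Union>(Cs ` P)) = UNIV"
      using e by blast
  next
    fix C x x'
    assume C: "C \<in> \<Union>(Cs ` P)" and "x \<in> C" "x' \<in> C" "\<exists>z\<in>V x. z \<noteq> 0"
    from C obtain p where "p \<in> P" "C \<in> Cs p" by blast
    then have "e x = p" "e x' = p"
      using Cs \<open>x \<in> C\<close> \<open>x' \<in> C\<close> by blast+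
    then show "\<exists>z\<in>V x'. z \<noteq> 0"
      using nonzero_iff \<open>\<exists>z\<in>V x. z \<noteq> 0\<close> by metis
  qed
qed

lemma nn_integral_lt_top_if_Lp_amplitude_lt_top:
  fixes d :: "('n \<Rightarrow> real) \<Rightarrow> enat"
  assumes "Lp_amplitude p A d < top"
  shows "(\<integral>\<^sup>+ x. enat_powr (d x) p \<partial>PiM A (\<lambda>_. lborel)) < \<infinity>"
  using assms
  unfolding Lp_amplitude_def lebesgue_on_coords_def nn_integral_completion ennreal_root_def
  by (auto simp: less_top split: if_split_asm)

lemma Lp_amplitude_eq_0_if_AE_zero:
  fixes d :: "('n \<Rightarrow> real) \<Rightarrow> enat"
  assumes "AE x in PiM A (\<lambda>_. lborel). d x = 0"
  shows "Lp_amplitude q A d = 0"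
proof -
  have "(\<integral>\<^sup>+ x. enat_powr (d x) q \<partial>PiM A (\<lambda>_. lborel)) = (\<integral>\<^sup>+ x. 0 \<partial>PiM A (\<lambda>_. lborel :: real measure))"
    using assms by (intro nn_integral_cong_AE) (auto simp: enat_powr_def zero_enat_def)
  then show ?thesis
    unfolding Lp_amplitude_def lebesgue_on_coords_def nn_integral_completion ennreal_root_def
    by simp
qed

lemma emeasure_lt_top_if_nonzero:
  fixes V :: "('n::finite \<Rightarrow> real) \<Rightarrow> 'v::ab_group_add set"
  assumes "vector_space s" and "\<forall>x. fin_dim_subspace s (V x)" and "0 \<le> p"
    and "hilbert_norm p s V < top"
    and "C \<in> sets (PiM UNIV (\<lambda>_. lborel))" and "\<forall>x\<in>C. \<exists>z\<in>V x. z \<noteq> 0"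
  shows "emeasure (PiM UNIV (\<lambda>_. lborel)) C < \<infinity>"
proof -
  let ?M = "PiM UNIV (\<lambda>_::'n. lborel :: real measure)"
  have "indicator C x \<le> enat_powr (enat (vector_space.dim s (V x))) p" for x
  proof (cases "x \<in> C")
    case True
    then have "1 \<le> vector_space.dim s (V x)"
      using assms(1,2,6) dim_ge_one_if_nonzero by blast
    then have "1 \<le> real (vector_space.dim s (V x)) powr p"
      using assms(3) by (intro ge_one_powr_ge_zero) auto
    then show ?thesis
      using True by (simp add: enat_powr_def)
  qed simp
  then have "emeasure ?M C \<le> (\<integral>\<^sup>+ x. enat_powr (enat (vector_space.dim s (V x))) p \<partial>?M)"
    using assms(5) nn_integral_mono[of ?M "indicator C"] by simp
  also have "\<dots> < \<infinity>"
    using assms(4) unfolding hilbert_norm_def by (rule nn_integral_lt_top_if_Lp_amplitude_lt_top)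
  finally show ?thesis .
qed

lemma AE_quot_restr_dim_eq_0:
  fixes V :: "('n::finite \<Rightarrow> real) \<Rightarrow> 'v::ab_group_add set"
  assumes vs: "vector_space s" and module: "Rn_module s V f" and "cubically_encoded s V f"
    and "0 \<le> p" and "hilbert_norm p s V < top" and "J \<noteq> {}"
  shows "AE y in PiM (-J) (\<lambda>_. lborel). quot_restr_dim s V f J y = 0"
proof -
  obtain \<A> where "finite \<A>" and cubes: "\<And>C. C \<in> \<A> \<Longrightarrow> cube C" and cover: "\<Union>\<A> = UNIV"
    and nonzero_on_cube: "\<And>C x x'. C \<in> \<A> \<Longrightarrow> x \<in> C \<Longrightarrow> x' \<in> C \<Longrightarrow>
                       \<exists>z\<in>V x. z \<noteq> 0 \<Longrightarrow> \<exists>z\<in>V x'. z \<noteq> 0"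
    using cubically_encoded_cube_cover[OF vs module \<open>cubically_encoded s V f\<close>] by metis
  define \<N> where "\<N> = {C \<in> \<A>. \<forall>x\<in>C. \<exists>z\<in>V x. z \<noteq> 0}"
  have "AE y in PiM (-J) (\<lambda>_. lborel). finite {k. ray J y k \<in> C}" if "C \<in> \<N>" for C
  proof -
    obtain I where I: "\<And>i. is_interval (I i)" and "C = {x. \<forall>i. x i \<in> I i}"
      using cubes \<open>C \<in> \<N>\<close> unfolding \<N>_def cube_def by blast
    then have C: "C = PiE UNIV I"
      by (auto simp: PiE_UNIV_domain)
    have "emeasure (PiM UNIV (\<lambda>_. lborel)) (PiE UNIV I) < \<infinity>"
      using vs module \<open>0 \<le> p\<close> \<open>hilbert_norm p s V < top\<close> \<open>C \<in> \<N>\<close> I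
      by (intro emeasure_lt_top_if_nonzero) (auto simp: pers_module_def \<N>_def C PiE_intervals_sets_PiM)
    then show ?thesis
      unfolding C by (rule AE_finite_ray_hits[of I, OF I _ \<open>J \<noteq> {}\<close>])
  qed
  moreover have "finite \<N>"
    using \<open>finite \<A>\<close> by (simp add: \<N>_def)
  ultimately have "AE y in PiM (-J) (\<lambda>_. lborel). \<forall>C\<in>\<N>. finite {k. ray J y k \<in> C}"
    by (intro AE_finite_allI)
  then show ?thesis
  proof eventually_elim
    case (elim y)
    show ?case
    proof (rule ccontr)
      assume "quot_restr_dim s V f J y \<noteq> 0"
      then have "\<exists>\<^sub>\<infinity>k. \<exists>z\<in>V (ray J y k). z \<noteq> 0"
        using quot_restr_dim_nonzero_eventually[OF vs module]
        by (intro MOST_INFM) (simp_all add: cofinite_eq_sequentially)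
      then have "\<exists>\<^sub>\<infinity>k. \<exists>C\<in>\<N>. ray J y k \<in> C"
      proof (rule INFM_mono)
        fix k
        assume "\<exists>z\<in>V (ray J y k). z \<noteq> 0"
        moreover obtain C where "C \<in> \<A>" "ray J y k \<in> C"
          using cover by (metis UNIV_I UnionE)
        ultimately show "\<exists>C\<in>\<N>. ray J y k \<in> C"
          using nonzero_on_cube unfolding \<N>_def by blast
      qed
      then have "\<exists>C\<in>\<N>. \<exists>\<^sub>\<infinity>k. ray J y k \<in> C"
        by (simp only: INFM_finite_Bex_distrib[OF \<open>finite \<N>\<close>])
      then obtain C where "C \<in> \<N>" and "infinite {k. ray J y k \<in> C}"
        by (auto simp: INFM_iff_infinite)
      with elim show False by blast
    qed
  qed
qed

theorem mainTheorem16: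
  fixes s :: "'k::field \<Rightarrow> 'v::ab_group_add \<Rightarrow> 'v"
    and V :: "('n::finite \<Rightarrow> real) \<Rightarrow> 'v set"
    and f :: "('n \<Rightarrow> real) \<Rightarrow> ('n \<Rightarrow> real) \<Rightarrow> 'v \<Rightarrow> 'v"
    and J :: "'n set" and p q :: real
  assumes "vector_space s"
    and "0 < card J" and "card J \<le> CARD('n) - 1"
    and "1 \<le> p" and "1 \<le> q"
    and "Rn_module s V f"
    and "cubically_encoded s V f"
    and "hilbert_norm p s V < top"
  shows "quot_hilbert_norm q s V f J = 0"
proof -
  have "J \<noteq> {}"
    using \<open>0 < card J\<close> by auto
  then have "AE y in PiM (-J) (\<lambda>_. lborel). quot_restr_dim s V f J y = 0"
    using assms \<open>1 \<le> p\<close> by (intro AE_quot_restr_dim_eq_0) simp_all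
  then show ?thesis
    unfolding quot_hilbert_norm_def by (rule Lp_amplitude_eq_0_if_AE_zero)
qed

end
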